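(* In the setting of the context, let $v\in J^k_o(X)$, choose $h\in\hat J^k(X)$ with $\delta_2(h)=v$, and write $h|_A=i_2(\{\gamma_A\})$, $h|_B=i_2(\{\gamma_B\})$ with $\gamma_A\in\mathbf\Lambda^{k-1}(A)$, $\gamma_B\in\mathbf\Lambda^{k-1}(B)$ (possible since $\delta_2(h|_A)=0=\delta_2(h|_B)$). Then $\gamma_A|_D-\gamma_B|_D\in\mathbf\Lambda^{k-1}_J(D)$, and its class $\Omega(v)$ in $Q_D:=\mathbf\Lambda^{k-1}_J(D)/(\mathbf\Lambda^{k-1}_J(A)|_D+\mathbf\Lambda^{k-1}_J(B)|_D)$ is independent of the choices of $h$ and of the representatives $\gamma_A,\gamma_B$. The resulting map $\Omega:J^k_o(X)\to Q_D$ is a group homomorphism.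
   Context: Let $J^*$ be a $\mathbb{Z}$-graded generalized cohomology theory on smooth manifolds (with corners) such that $J^k(\mathrm{pt})$ is finitely generated for every $k$; write $J^k(M;\mathbb{Z})=J^k(M)$, and $J^k(M;\mathbb{R})$, $J^k(M;\mathbb{R}/\mathbb{Z})$ for the associated theories with real and $\mathbb{R}/\mathbb{Z}$ coefficients. For $F=\mathbb{Q},\mathbb{R}$ set $\mathbf H^k(M;F)=\bigoplus_{j\ge0}H^j(M;J^{k-j}(\mathrm{pt})\otimes F)$, and $\mathbf\Lambda^k(M)=\bigoplus_{j\ge0}\Omega^j(M;J^{k-j}(\mathrm{pt})\otimes\mathbb{R})$ (smooth forms), with exterior derivative $d$. Let $ch:J^k(M;\mathbb{Z})\to\mathbf H^k(M;\mathbb{Q})$ be the canonical (Chern character) map, $i_\mathbb{R}:\mathbf H^k(M;\mathbb{Q})\to\mathbf H^k(M;\mathbb{R})$ the coefficient map, and $\mathbf\Lambda^k_J(M)$ the closed forms in $\mathbf\Lambda^k(M)$ whose de Rham class lies in $i_\mathbb{R}(ch(J^k(M;\mathbb{Z})))$. Let $p:\mathbf H^{k-1}(M;\mathbb{R})\to J^{k-1}(M;\mathbb{R}/\mathbb{Z})$ be induced by $\mathbb{R}\to\mathbb{R}/\mathbb{Z}$ and $b$ the Bockstein. $\hat J^k$ is a differential cohomology functor associated to $J$: a functor from smooth manifolds with corners to abelian groups with natural transformations $i_1:J^{k-1}(\cdot;\mathbb{R}/\mathbb{Z})\to\hat J^k$, $i_2:\mathbf\Lambda^{k-1}/\mathbf\Lambda^{k-1}_J\to\hat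 J^k$, $\delta_1:\hat J^k\to\mathbf\Lambda^k_J$, $\delta_2:\hat J^k\to J^k(\cdot;\mathbb{Z})$ such that $0\to J^{k-1}(\mathbb{R}/\mathbb{Z})\xrightarrow{i_1}\hat J^k\xrightarrow{\delta_1}\mathbf\Lambda^k_J\to0$ and $0\to\mathbf\Lambda^{k-1}/\mathbf\Lambda^{k-1}_J\xrightarrow{i_2}\hat J^k\xrightarrow{\delta_2}J^k(\mathbb{Z})\to0$ are exact, $\delta_2 i_1=b$, $\delta_1 i_2=d$, $i_1\circ p=i_2\circ\mathrm{deRh}$ (deRh sending a real class to the class of a closed representative), and $\mathrm{deRh}\circ\delta_1=i_\mathbb{R}\circ ch\circ\delta_2$ (deRh sending a closed form to its class). Geometric setting: $X$ is a compact smooth manifold, $X=A\cup B$ with $A,B$ compact codimension-$0$ submanifolds, $D=A\cap B$ a codimension-$0$ submanifold with collar neighborhoods in both $A$ and $B$. $J^k_o(X)=\{v\in J^k(X;\mathbb{Z}): v|_A=0=v|_B\}$. For a form $\alpha$, $\{\alpha\}$ denotes its class modulo $\mathbf\Lambda^{k-1}_J$. *)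

theory Defs
  imports Main
begin

text \<open>Abstract (algebraic) model of the data of a differential cohomology functor
evaluated on one manifold M, restricted to what is relevant for degree k.
  form_d   : d : Lambda^{k-1}(M) -> Lambda^k(M)
  form_dR  : deRh : closed forms in Lambda^{k-1}(M) -> H^{k-1}(M;R)
  chern    : ch : J^{k-1}(M;Z) -> H^{k-1}(M;Q)
  coefR    : i_R : H^{k-1}(M;Q) -> H^{k-1}(M;R)
  iota2    : Lambda^{k-1}(M) -> Lambda^{k-1}/Lambda^{k-1}_J -> hatJ^k(M)  (i_2 composed with projection)
  delta2   : hatJ^k(M) -> J^k(M;Z)\<close>

record ('f, 'g, 'r, 'q, 'c, 'h, 'j) dcspace =
  form_d :: "'f \<Rightarrow> 'g"
  form_dR :: "'f \<Rightarrow> 'r"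
  chern :: "'c \<Rightarrow> 'q"
  coefR :: "'q \<Rightarrow> 'r"
  iota2 :: "'f \<Rightarrow> 'h"
  delta2 :: "'h \<Rightarrow> 'j"

record ('f, 'g, 'r, 'q, 'c, 'h, 'j, 'f2, 'g2, 'r2, 'q2, 'c2, 'h2, 'j2) dcrestr =
  res_f :: "'f \<Rightarrow> 'f2"
  res_g :: "'g \<Rightarrow> 'g2"
  res_r :: "'r \<Rightarrow> 'r2"
  res_q :: "'q \<Rightarrow> 'q2"
  res_c :: "'c \<Rightarrow> 'c2"
  res_h :: "'h \<Rightarrow> 'h2"
  res_j :: "'j \<Rightarrow> 'j2"

definition hom_add :: "('a::ab_group_add \<Rightarrow> 'b::ab_group_add) \<Rightarrow> bool" where
  "hom_add f \<longleftrightarrow> (\<forall>x y. f (x + y) = f x + f y)"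

definition closed_forms :: "('f::ab_group_add, 'g::ab_group_add, 'r, 'q, 'c, 'h, 'j, 'z) dcspace_scheme \<Rightarrow> 'f set" where
  "closed_forms S = {\<omega>. form_d S \<omega> = 0}"

definition LambdaJ :: "('f::ab_group_add, 'g::ab_group_add, 'r, 'q, 'c, 'h, 'j, 'z) dcspace_scheme \<Rightarrow> 'f set" where
  "LambdaJ S = {\<omega>. form_d S \<omega> = 0 \<and> form_dR S \<omega> \<in> range (\<lambda>c. coefR S (chern S c))}"

text \<open>Axioms of the data on one manifold: all maps are homomorphisms (deRh on closed forms),
iota2 induces an injective map on Lambda^{k-1}/Lambda^{k-1}_J, and the sequence
0 -> Lambda^{k-1}/Lambda^{k-1}_J -> hatJ^k -> J^k(Z) -> 0 is exact.\<close>
definition dc_space ::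
  "('f::ab_group_add, 'g::ab_group_add, 'r::ab_group_add, 'q::ab_group_add, 'c::ab_group_add,
    'h::ab_group_add, 'j::ab_group_add) dcspace \<Rightarrow> bool" where
  "dc_space S \<longleftrightarrow>
     hom_add (form_d S) \<and> hom_add (chern S) \<and> hom_add (coefR S) \<and>
     hom_add (iota2 S) \<and> hom_add (delta2 S) \<and>
     (\<forall>x\<in>closed_forms S. \<forall>y\<in>closed_forms S. form_dR S (x + y) = form_dR S x + form_dR S y) \<and>
     (\<forall>\<omega>. iota2 S \<omega> = 0 \<longleftrightarrow> \<omega> \<in> LambdaJ S) \<and>
     (\<forall>h. delta2 S h = 0 \<longleftrightarrow> h \<in> range (iota2 S)) \<and>
     surj (delta2 S)"

definition dc_restr ::
  "('f::ab_group_add, 'g::ab_group_add, 'r::ab_group_add, 'q::ab_group_add, 'c::ab_group_add,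
    'h::ab_group_add, 'j::ab_group_add) dcspace \<Rightarrow>
   ('f2::ab_group_add, 'g2::ab_group_add, 'r2::ab_group_add, 'q2::ab_group_add, 'c2::ab_group_add,
    'h2::ab_group_add, 'j2::ab_group_add) dcspace \<Rightarrow>
   ('f, 'g, 'r, 'q, 'c, 'h, 'j, 'f2, 'g2, 'r2, 'q2, 'c2, 'h2, 'j2) dcrestr \<Rightarrow> bool" where
  "dc_restr S T \<rho> \<longleftrightarrow>
     hom_add (res_f \<rho>) \<and> hom_add (res_g \<rho>) \<and> hom_add (res_r \<rho>) \<and> hom_add (res_q \<rho>) \<and>
     hom_add (res_c \<rho>) \<and> hom_add (res_h \<rho>) \<and> hom_add (res_j \<rho>) \<and>
     (\<forall>\<omega>. res_g \<rho> (form_d S \<omega>) = form_d T (res_f \<rho> \<omega>)) \<and>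
     (\<forall>\<omega>\<in>closed_forms S. res_r \<rho> (form_dR S \<omega>) = form_dR T (res_f \<rho> \<omega>)) \<and>
     (\<forall>c. res_q \<rho> (chern S c) = chern T (res_c \<rho> c)) \<and>
     (\<forall>q. res_r \<rho> (coefR S q) = coefR T (res_q \<rho> q)) \<and>
     (\<forall>\<omega>. res_h \<rho> (iota2 S \<omega>) = iota2 T (res_f \<rho> \<omega>)) \<and>
     (\<forall>h. res_j \<rho> (delta2 S h) = delta2 T (res_h \<rho> h))"

text \<open>Functoriality for the square X -> A -> D, X -> B -> D: both composite restrictions X -> D agree.\<close>
definition restr_commute ::
  "('f, 'g, 'r, 'q, 'c, 'h, 'j, 'f1, 'g1, 'r1, 'q1, 'c1, 'h1, 'j1) dcrestr \<Rightarrow>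
   ('f1, 'g1, 'r1, 'q1, 'c1, 'h1, 'j1, 'f3, 'g3, 'r3, 'q3, 'c3, 'h3, 'j3) dcrestr \<Rightarrow>
   ('f, 'g, 'r, 'q, 'c, 'h, 'j, 'f2, 'g2, 'r2, 'q2, 'c2, 'h2, 'j2) dcrestr \<Rightarrow>
   ('f2, 'g2, 'r2, 'q2, 'c2, 'h2, 'j2, 'f3, 'g3, 'r3, 'q3, 'c3, 'h3, 'j3) dcrestr \<Rightarrow> bool" where
  "restr_commute \<rho>XA \<rho>AD \<rho>XB \<rho>BD \<longleftrightarrow>
     res_f \<rho>AD \<circ> res_f \<rho>XA = res_f \<rho>BD \<circ> res_f \<rho>XB \<and>
     res_g \<rho>AD \<circ> res_g \<rho>XA = res_g \<rho>BD \<circ> res_g \<rho>XB \<and>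
     res_r \<rho>AD \<circ> res_r \<rho>XA = res_r \<rho>BD \<circ> res_r \<rho>XB \<and>
     res_q \<rho>AD \<circ> res_q \<rho>XA = res_q \<rho>BD \<circ> res_q \<rho>XB \<and>
     res_c \<rho>AD \<circ> res_c \<rho>XA = res_c \<rho>BD \<circ> res_c \<rho>XB \<and>
     res_h \<rho>AD \<circ> res_h \<rho>XA = res_h \<rho>BD \<circ> res_h \<rho>XB \<and>
     res_j \<rho>AD \<circ> res_j \<rho>XA = res_j \<rho>BD \<circ> res_j \<rho>XB"

definition Jo where
  "Jo \<rho>XA \<rho>XB = {v. res_j \<rho>XA v = 0 \<and> res_j \<rho>XB v = 0}"

definition admissible where
  "admissible SX SA SB \<rho>XA \<rho>XB v h \<gamma>A \<gamma>B \<longleftrightarrow>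
     delta2 SX h = v \<and> res_h \<rho>XA h = iota2 SA \<gamma>A \<and> res_h \<rho>XB h = iota2 SB \<gamma>B"

text \<open>The subgroup Lambda_J(A)|_D + Lambda_J(B)|_D of Lambda_J(D) by which Q_D is the quotient.\<close>
definition QDsub where
  "QDsub SA SB \<rho>AD \<rho>BD =
     {res_f \<rho>AD a + res_f \<rho>BD b | a b. a \<in> LambdaJ SA \<and> b \<in> LambdaJ SB}"

text \<open>Omega(v): the set of all gamma_A|_D - gamma_B|_D + s, over all admissible choices and
all s in QDsub, i.e. (by well-definedness) the coset in Q_D.\<close>
definition Omega where
  "Omega SX SA SB \<rho>XA \<rho>XB \<rho>AD \<rho>BD v =
     {res_f \<rho>AD \<gamma>A - res_f \<rho>BD \<gamma>B + s | h \<gamma>A \<gamma>B s.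
        admissible SX SA SB \<rho>XA \<rho>XB v h \<gamma>A \<gamma>B \<and> s \<in> QDsub SA SB \<rho>AD \<rho>BD}"

end

theory Submission
  imports Defs
begin

text \<open>
  Since v restricts to zero on A and on B, any lift h in hat-J^k(X) of v restricts on A and on B
  into the image of i_2, i.e. to i_2{gamma_A} and i_2{gamma_B}.  Both restrict to the same class
  on D, so i_2{gamma_A|_D - gamma_B|_D} = 0, which means gamma_A|_D - gamma_B|_D lies in
  Lambda_J(D).  Two admissible choices differ by an admissible choice for v - v = 0; for it the
  lift is i_2{eta} for a form eta on X, so the form differences on A and B differ from eta|_A and
  eta|_B by elements of Lambda_J, and eta|_A|_D = eta|_B|_D makes the D-difference lie in
  Lambda_J(A)|_D + Lambda_J(B)|_D.  Additivity holds because admissible choices can be added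
  and subtracted componentwise.
\<close>

lemma hom_add_add: "hom_add f \<Longrightarrow> f (x + y) = f x + f y"
  unfolding hom_add_def by blast

lemma hom_add_0: "hom_add f \<Longrightarrow> f 0 = 0"
  by (metis add_cancel_right_right hom_add_add add_0)

lemma hom_add_diff: "hom_add f \<Longrightarrow> f (x - y) = f x - f y"
  by (metis diff_add_cancel eq_diff_eq hom_add_add)

lemma dc_space_maps:
  assumes "dc_space S"
  shows "hom_add (iota2 S)" "hom_add (delta2 S)" "surj (delta2 S)"
    and "delta2 S h = 0 \<longleftrightarrow> (\<exists>\<gamma>. h = iota2 S \<gamma>)"
  using assms unfolding dc_space_def by auto

lemma LambdaJ_iff_iota2:
  "dc_space S \<Longrightarrow> \<omega> \<in> LambdaJ S \<longleftrightarrow> iota2 S \<omega> = 0"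
  unfolding dc_space_def by blast

lemma dc_restr_maps:
  assumes "dc_restr S T \<rho>"
  shows "hom_add (res_f \<rho>)" "hom_add (res_h \<rho>)" "hom_add (res_j \<rho>)"
    and "res_h \<rho> (iota2 S \<omega>) = iota2 T (res_f \<rho> \<omega>)"
    and "res_j \<rho> (delta2 S h) = delta2 T (res_h \<rho> h)"
  using assms unfolding dc_restr_def by auto

lemma restr_commute_apply:
  assumes "restr_commute \<rho>XA \<rho>AD \<rho>XB \<rho>BD"
  shows "res_f \<rho>AD (res_f \<rho>XA \<omega>) = res_f \<rho>BD (res_f \<rho>XB \<omega>)"
    and "res_h \<rho>AD (res_h \<rho>XA h) = res_h \<rho>BD (res_h \<rho>XB h)"
  using assms unfolding restr_commute_def by (metis comp_apply)+

lemma LambdaJ_zero: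
  assumes "dc_space S" shows "0 \<in> LambdaJ S"
  unfolding LambdaJ_iff_iota2[OF assms] hom_add_0[OF dc_space_maps(1)[OF assms]] ..

lemma LambdaJ_add:
  assumes "dc_space S" "\<alpha> \<in> LambdaJ S" "\<beta> \<in> LambdaJ S"
  shows "\<alpha> + \<beta> \<in> LambdaJ S"
  using assms(2,3) unfolding LambdaJ_iff_iota2[OF assms(1)] hom_add_add[OF dc_space_maps(1)[OF assms(1)]]
  by simp

lemma LambdaJ_of_iota2_eq:
  assumes "dc_space S" "iota2 S \<alpha> = iota2 S \<beta>"
  shows "\<alpha> - \<beta> \<in> LambdaJ S"
  using assms(2) unfolding LambdaJ_iff_iota2[OF assms(1)] hom_add_diff[OF dc_space_maps(1)[OF assms(1)]]
  by simp

lemma QDsub_zero: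
  assumes "dc_space SA" "dc_space SB" "dc_restr SA SD \<rho>AD" "dc_restr SB SD \<rho>BD"
  shows "0 \<in> QDsub SA SB \<rho>AD \<rho>BD"
proof -
  have "res_f \<rho>AD 0 + res_f \<rho>BD 0 = 0"
    unfolding hom_add_0[OF dc_restr_maps(1)[OF assms(3)]] hom_add_0[OF dc_restr_maps(1)[OF assms(4)]]
    by simp
  then show ?thesis
    unfolding QDsub_def using LambdaJ_zero[OF assms(1)] LambdaJ_zero[OF assms(2)] by force
qed

lemma QDsub_add:
  assumes "dc_space SA" "dc_space SB" "dc_restr SA SD \<rho>AD" "dc_restr SB SD \<rho>BD"
    and "s \<in> QDsub SA SB \<rho>AD \<rho>BD" "t \<in> QDsub SA SB \<rho>AD \<rho>BD"
  shows "s + t \<in> QDsub SA SB \<rho>AD \<rho>BD"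
proof -
  obtain a b a' b' where
    s: "s = res_f \<rho>AD a + res_f \<rho>BD b" and t: "t = res_f \<rho>AD a' + res_f \<rho>BD b'"
    and J: "a \<in> LambdaJ SA" "b \<in> LambdaJ SB" "a' \<in> LambdaJ SA" "b' \<in> LambdaJ SB"
    using assms(5,6) unfolding QDsub_def by blast
  have "s + t = res_f \<rho>AD (a + a') + res_f \<rho>BD (b + b')"
    unfolding s t hom_add_add[OF dc_restr_maps(1)[OF assms(3)]] hom_add_add[OF dc_restr_maps(1)[OF assms(4)]]
    by (simp add: algebra_simps)
  then show ?thesis
    unfolding QDsub_def using J LambdaJ_add[OF assms(1)] LambdaJ_add[OF assms(2)] by blast
qed

text \<open>Restrictions of Lambda_J-forms are again in Lambda_J, so Q_D is a quotient of Lambda_J(D).\<close>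
lemma QDsub_subset_LambdaJ:
  assumes "dc_space SA" "dc_space SB" "dc_space SD"
    and "dc_restr SA SD \<rho>AD" "dc_restr SB SD \<rho>BD"
  shows "QDsub SA SB \<rho>AD \<rho>BD \<subseteq> LambdaJ SD"
proof
  fix x assume "x \<in> QDsub SA SB \<rho>AD \<rho>BD"
  then obtain a b where x: "x = res_f \<rho>AD a + res_f \<rho>BD b"
    and "a \<in> LambdaJ SA" "b \<in> LambdaJ SB"
    unfolding QDsub_def by blast
  then have a: "iota2 SA a = 0" and b: "iota2 SB b = 0"
    using LambdaJ_iff_iota2[OF assms(1)] LambdaJ_iff_iota2[OF assms(2)] by blast+
  have "iota2 SD x = iota2 SD (res_f \<rho>AD a) + iota2 SD (res_f \<rho>BD b)"
    unfolding x using hom_add_add[OF dc_space_maps(1)[OF assms(3)]] .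
  also have "\<dots> = res_h \<rho>AD (iota2 SA a) + res_h \<rho>BD (iota2 SB b)"
    unfolding dc_restr_maps(4)[OF assms(4)] dc_restr_maps(4)[OF assms(5)] ..
  also have "\<dots> = 0"
    unfolding a b hom_add_0[OF dc_restr_maps(2)[OF assms(4)]] hom_add_0[OF dc_restr_maps(2)[OF assms(5)]]
    by simp
  finally show "x \<in> LambdaJ SD" unfolding LambdaJ_iff_iota2[OF assms(3)] .
qed

text \<open>Every v in J^k_o(X) admits a choice (h, gamma_A, gamma_B): lift v to h by surjectivity of
  delta_2; h|_A and h|_B lie in ker delta_2 = im i_2 by naturality.\<close>
lemma admissible_exists:
  assumes "dc_space SX" "dc_space SA" "dc_space SB"
    and "dc_restr SX SA \<rho>XA" "dc_restr SX SB \<rho>XB"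
    and v: "v \<in> Jo \<rho>XA \<rho>XB"
  shows "\<exists>h \<gamma>A \<gamma>B. admissible SX SA SB \<rho>XA \<rho>XB v h \<gamma>A \<gamma>B"
proof -
  obtain h where h: "delta2 SX h = v"
    using dc_space_maps(3)[OF assms(1)] by (metis surjD)
  have "delta2 SA (res_h \<rho>XA h) = 0" "delta2 SB (res_h \<rho>XB h) = 0"
    using v h dc_restr_maps(5)[OF assms(4)] dc_restr_maps(5)[OF assms(5)]
    unfolding Jo_def by auto
  then obtain \<gamma>A \<gamma>B where "res_h \<rho>XA h = iota2 SA \<gamma>A" "res_h \<rho>XB h = iota2 SB \<gamma>B"
    using dc_space_maps(4)[OF assms(2)] dc_space_maps(4)[OF assms(3)] by blast
  then show ?thesis using h unfolding admissible_def by blast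
qed

lemma admissible_add:
  assumes "dc_space SX" "dc_space SA" "dc_space SB"
    and "dc_restr SX SA \<rho>XA" "dc_restr SX SB \<rho>XB"
    and "admissible SX SA SB \<rho>XA \<rho>XB v h \<gamma>A \<gamma>B"
    and "admissible SX SA SB \<rho>XA \<rho>XB v' h' \<gamma>A' \<gamma>B'"
  shows "admissible SX SA SB \<rho>XA \<rho>XB (v + v') (h + h') (\<gamma>A + \<gamma>A') (\<gamma>B + \<gamma>B')"
  using assms(6,7) unfolding admissible_def
  by (simp add: hom_add_add[OF dc_space_maps(2)[OF assms(1)]]
      hom_add_add[OF dc_restr_maps(2)[OF assms(4)]] hom_add_add[OF dc_restr_maps(2)[OF assms(5)]]
      hom_add_add[OF dc_space_maps(1)[OF assms(2)]] hom_add_add[OF dc_space_maps(1)[OF assms(3)]])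

lemma admissible_diff:
  assumes "dc_space SX" "dc_space SA" "dc_space SB"
    and "dc_restr SX SA \<rho>XA" "dc_restr SX SB \<rho>XB"
    and "admissible SX SA SB \<rho>XA \<rho>XB v h \<gamma>A \<gamma>B"
    and "admissible SX SA SB \<rho>XA \<rho>XB v' h' \<gamma>A' \<gamma>B'"
  shows "admissible SX SA SB \<rho>XA \<rho>XB (v - v') (h - h') (\<gamma>A - \<gamma>A') (\<gamma>B - \<gamma>B')"
  using assms(6,7) unfolding admissible_def
  by (simp add: hom_add_diff[OF dc_space_maps(2)[OF assms(1)]]
      hom_add_diff[OF dc_restr_maps(2)[OF assms(4)]] hom_add_diff[OF dc_restr_maps(2)[OF assms(5)]]
      hom_add_diff[OF dc_space_maps(1)[OF assms(2)]] hom_add_diff[OF dc_space_maps(1)[OF assms(3)]])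

lemma Jo_add:
  assumes "dc_restr SX SA \<rho>XA" "dc_restr SX SB \<rho>XB"
    and "v \<in> Jo \<rho>XA \<rho>XB" "w \<in> Jo \<rho>XA \<rho>XB"
  shows "v + w \<in> Jo \<rho>XA \<rho>XB"
  using assms(3,4) hom_add_add[OF dc_restr_maps(3)[OF assms(1)]]
    hom_add_add[OF dc_restr_maps(3)[OF assms(2)]]
  unfolding Jo_def by simp

text \<open>The D-difference of an admissible choice is J-integral: both forms represent h|_D.\<close>
lemma admissible_difference_LambdaJ:
  assumes "dc_space SD" "dc_restr SA SD \<rho>AD" "dc_restr SB SD \<rho>BD"
    and "restr_commute \<rho>XA \<rho>AD \<rho>XB \<rho>BD"
    and "admissible SX SA SB \<rho>XA \<rho>XB v h \<gamma>A \<gamma>B"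
  shows "res_f \<rho>AD \<gamma>A - res_f \<rho>BD \<gamma>B \<in> LambdaJ SD"
proof -
  have "iota2 SD (res_f \<rho>AD \<gamma>A) = res_h \<rho>AD (res_h \<rho>XA h)"
    using assms(5) dc_restr_maps(4)[OF assms(2)] unfolding admissible_def by simp
  also have "\<dots> = res_h \<rho>BD (res_h \<rho>XB h)"
    using restr_commute_apply(2)[OF assms(4)] .
  also have "\<dots> = iota2 SD (res_f \<rho>BD \<gamma>B)"
    using assms(5) dc_restr_maps(4)[OF assms(3)] unfolding admissible_def by simp
  finally show ?thesis using LambdaJ_of_iota2_eq[OF assms(1)] by blast
qed

text \<open>An admissible choice for 0 has D-difference in Lambda_J(A)|_D + Lambda_J(B)|_D: its lift
  is i_2(eta), and gamma_A - eta|_A, eta|_B - gamma_B are J-integral while eta restricts to D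
  the same way through A and through B.\<close>
lemma admissible_zero_difference_QDsub:
  assumes "dc_space SX" "dc_space SA" "dc_space SB"
    and "dc_restr SX SA \<rho>XA" "dc_restr SX SB \<rho>XB"
    and "dc_restr SA SD \<rho>AD" "dc_restr SB SD \<rho>BD"
    and "restr_commute \<rho>XA \<rho>AD \<rho>XB \<rho>BD"
    and adm: "admissible SX SA SB \<rho>XA \<rho>XB 0 h \<gamma>A \<gamma>B"
  shows "res_f \<rho>AD \<gamma>A - res_f \<rho>BD \<gamma>B \<in> QDsub SA SB \<rho>AD \<rho>BD"
proof -
  obtain \<eta> where \<eta>: "h = iota2 SX \<eta>"
    using adm dc_space_maps(4)[OF assms(1)] unfolding admissible_def by blast
  have a: "\<gamma>A - res_f \<rho>XA \<eta> \<in> LambdaJ SA"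
    using adm \<eta> dc_restr_maps(4)[OF assms(4)] LambdaJ_of_iota2_eq[OF assms(2)]
    unfolding admissible_def by simp
  have b: "res_f \<rho>XB \<eta> - \<gamma>B \<in> LambdaJ SB"
    using adm \<eta> dc_restr_maps(4)[OF assms(5)] LambdaJ_of_iota2_eq[OF assms(3)]
    unfolding admissible_def by simp
  have "res_f \<rho>AD \<gamma>A - res_f \<rho>BD \<gamma>B
      = res_f \<rho>AD (\<gamma>A - res_f \<rho>XA \<eta>) + res_f \<rho>BD (res_f \<rho>XB \<eta> - \<gamma>B)"
    using restr_commute_apply(1)[OF assms(8)]
      hom_add_diff[OF dc_restr_maps(1)[OF assms(6)]] hom_add_diff[OF dc_restr_maps(1)[OF assms(7)]]
    by simp
  then show ?thesis using a b unfolding QDsub_def by blast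
qed

lemma admissible_independent:
  assumes "dc_space SX" "dc_space SA" "dc_space SB"
    and "dc_restr SX SA \<rho>XA" "dc_restr SX SB \<rho>XB"
    and "dc_restr SA SD \<rho>AD" "dc_restr SB SD \<rho>BD"
    and "restr_commute \<rho>XA \<rho>AD \<rho>XB \<rho>BD"
    and "admissible SX SA SB \<rho>XA \<rho>XB v h \<gamma>A \<gamma>B"
    and "admissible SX SA SB \<rho>XA \<rho>XB v h' \<gamma>A' \<gamma>B'"
  shows "(res_f \<rho>AD \<gamma>A - res_f \<rho>BD \<gamma>B) - (res_f \<rho>AD \<gamma>A' - res_f \<rho>BD \<gamma>B')
           \<in> QDsub SA SB \<rho>AD \<rho>BD"
proof -
  have "admissible SX SA SB \<rho>XA \<rho>XB 0 (h - h') (\<gamma>A - \<gamma>A') (\<gamma>B - \<gamma>B')"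
    using admissible_diff[OF assms(1-5,9,10)] by simp
  from admissible_zero_difference_QDsub[OF assms(1-8) this] show ?thesis
    using hom_add_diff[OF dc_restr_maps(1)[OF assms(6)]] hom_add_diff[OF dc_restr_maps(1)[OF assms(7)]]
    by (simp add: algebra_simps)
qed

lemma Omega_iff:
  "x \<in> Omega SX SA SB \<rho>XA \<rho>XB \<rho>AD \<rho>BD v \<longleftrightarrow>
     (\<exists>h \<gamma>A \<gamma>B s. admissible SX SA SB \<rho>XA \<rho>XB v h \<gamma>A \<gamma>B \<and> s \<in> QDsub SA SB \<rho>AD \<rho>BD \<and>
        x = res_f \<rho>AD \<gamma>A - res_f \<rho>BD \<gamma>B + s)"
  unfolding Omega_def by blast

text \<open>Omega(v + w) = Omega(v) + Omega(w) as sets.  One inclusion adds admissible choices for v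
  and w; for the other, an admissible choice for v + w minus a fixed one for v is admissible
  for w.\<close>
lemma Omega_add:
  assumes "dc_space SX" "dc_space SA" "dc_space SB"
    and "dc_restr SX SA \<rho>XA" "dc_restr SX SB \<rho>XB"
    and "dc_restr SA SD \<rho>AD" "dc_restr SB SD \<rho>BD"
    and v: "v \<in> Jo \<rho>XA \<rho>XB"
  shows "Omega SX SA SB \<rho>XA \<rho>XB \<rho>AD \<rho>BD (v + w) =
           {a + b | a b. a \<in> Omega SX SA SB \<rho>XA \<rho>XB \<rho>AD \<rho>BD v \<and>
                         b \<in> Omega SX SA SB \<rho>XA \<rho>XB \<rho>AD \<rho>BD w}"
    (is "?O (v + w) = {a + b | a b. a \<in> ?O v \<and> b \<in> ?O w}")
proof -
  have rAD: "hom_add (res_f \<rho>AD)" and rBD: "hom_add (res_f \<rho>BD)"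
    using dc_restr_maps(1)[OF assms(6)] dc_restr_maps(1)[OF assms(7)] .
  show ?thesis
  proof (intro set_eqI iffI)
    fix x assume "x \<in> ?O (v + w)"
    then obtain h gA gB s where adm: "admissible SX SA SB \<rho>XA \<rho>XB (v + w) h gA gB"
      and s: "s \<in> QDsub SA SB \<rho>AD \<rho>BD" and x: "x = res_f \<rho>AD gA - res_f \<rho>BD gB + s"
      unfolding Omega_iff by blast
    obtain h1 a1 b1 where adm1: "admissible SX SA SB \<rho>XA \<rho>XB v h1 a1 b1"
      using admissible_exists[OF assms(1-5) v] by blast
    have adm2: "admissible SX SA SB \<rho>XA \<rho>XB w (h - h1) (gA - a1) (gB - b1)"
      using admissible_diff[OF assms(1-5) adm adm1] by simp
    have "res_f \<rho>AD a1 - res_f \<rho>BD b1 + 0 \<in> ?O v"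
      using adm1 QDsub_zero[OF assms(2,3,6,7)] unfolding Omega_iff by blast
    moreover have "res_f \<rho>AD (gA - a1) - res_f \<rho>BD (gB - b1) + s \<in> ?O w"
      using adm2 s unfolding Omega_iff by blast
    moreover have "x = (res_f \<rho>AD a1 - res_f \<rho>BD b1 + 0)
                     + (res_f \<rho>AD (gA - a1) - res_f \<rho>BD (gB - b1) + s)"
      unfolding x hom_add_diff[OF rAD] hom_add_diff[OF rBD] by (simp add: algebra_simps)
    ultimately show "x \<in> {a + b | a b. a \<in> ?O v \<and> b \<in> ?O w}" by blast
  next
    fix x assume "x \<in> {a + b | a b. a \<in> ?O v \<and> b \<in> ?O w}"
    then obtain h1 a1 b1 s1 h2 a2 b2 s2 where
      adm1: "admissible SX SA SB \<rho>XA \<rho>XB v h1 a1 b1" and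
      adm2: "admissible SX SA SB \<rho>XA \<rho>XB w h2 a2 b2" and
      s: "s1 \<in> QDsub SA SB \<rho>AD \<rho>BD" "s2 \<in> QDsub SA SB \<rho>AD \<rho>BD" and
      x: "x = (res_f \<rho>AD a1 - res_f \<rho>BD b1 + s1) + (res_f \<rho>AD a2 - res_f \<rho>BD b2 + s2)"
      unfolding Omega_iff by blast
    have "x = res_f \<rho>AD (a1 + a2) - res_f \<rho>BD (b1 + b2) + (s1 + s2)"
      unfolding x hom_add_add[OF rAD] hom_add_add[OF rBD] by (simp add: algebra_simps)
    then show "x \<in> ?O (v + w)"
      unfolding Omega_iff using admissible_add[OF assms(1-5) adm1 adm2]
        QDsub_add[OF assms(2,3,6,7) s] by blast
  qed
qed

theorem mainTheorem2:
  assumes "dc_space SX" and "dc_space SA" and "dc_space SB" and "dc_space SD"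
    and "dc_restr SX SA \<rho>XA" and "dc_restr SX SB \<rho>XB"
    and "dc_restr SA SD \<rho>AD" and "dc_restr SB SD \<rho>BD"
    and "restr_commute \<rho>XA \<rho>AD \<rho>XB \<rho>BD"
  shows
    "(\<forall>v \<in> Jo \<rho>XA \<rho>XB. \<exists>h \<gamma>A \<gamma>B. admissible SX SA SB \<rho>XA \<rho>XB v h \<gamma>A \<gamma>B)
   \<and> (\<forall>v \<in> Jo \<rho>XA \<rho>XB. \<forall>h \<gamma>A \<gamma>B. admissible SX SA SB \<rho>XA \<rho>XB v h \<gamma>A \<gamma>B \<longrightarrow>
        res_f \<rho>AD \<gamma>A - res_f \<rho>BD \<gamma>B \<in> LambdaJ SD)
   \<and> (\<forall>v \<in> Jo \<rho>XA \<rho>XB. \<forall>h \<gamma>A \<gamma>B h' \<gamma>A' \<gamma>B'.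
        admissible SX SA SB \<rho>XA \<rho>XB v h \<gamma>A \<gamma>B \<longrightarrow>
        admissible SX SA SB \<rho>XA \<rho>XB v h' \<gamma>A' \<gamma>B' \<longrightarrow>
        (res_f \<rho>AD \<gamma>A - res_f \<rho>BD \<gamma>B) - (res_f \<rho>AD \<gamma>A' - res_f \<rho>BD \<gamma>B')
          \<in> QDsub SA SB \<rho>AD \<rho>BD)
   \<and> QDsub SA SB \<rho>AD \<rho>BD \<subseteq> LambdaJ SD
   \<and> (\<forall>v \<in> Jo \<rho>XA \<rho>XB. \<forall>w \<in> Jo \<rho>XA \<rho>XB. v + w \<in> Jo \<rho>XA \<rho>XB \<and>
        Omega SX SA SB \<rho>XA \<rho>XB \<rho>AD \<rho>BD (v + w) =
          {a + b | a b. a \<in> Omega SX SA SB \<rho>XA \<rho>XB \<rho>AD \<rho>BD v \<and>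
                        b \<in> Omega SX SA SB \<rho>XA \<rho>XB \<rho>AD \<rho>BD w})"
proof (intro conjI ballI allI impI)
  show "\<exists>h \<gamma>A \<gamma>B. admissible SX SA SB \<rho>XA \<rho>XB v h \<gamma>A \<gamma>B"
    if "v \<in> Jo \<rho>XA \<rho>XB" for v
    using admissible_exists[OF assms(1-3,5,6) that] .
  show "res_f \<rho>AD \<gamma>A - res_f \<rho>BD \<gamma>B \<in> LambdaJ SD"
    if "admissible SX SA SB \<rho>XA \<rho>XB v h \<gamma>A \<gamma>B" for v h \<gamma>A \<gamma>B
    using admissible_difference_LambdaJ[OF assms(4,7-9) that] .
  show "(res_f \<rho>AD \<gamma>A - res_f \<rho>BD \<gamma>B) - (res_f \<rho>AD \<gamma>A' - res_f \<rho>BD \<gamma>B')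
          \<in> QDsub SA SB \<rho>AD \<rho>BD"
    if "admissible SX SA SB \<rho>XA \<rho>XB v h \<gamma>A \<gamma>B"
      and "admissible SX SA SB \<rho>XA \<rho>XB v h' \<gamma>A' \<gamma>B'" for v h \<gamma>A \<gamma>B h' \<gamma>A' \<gamma>B'
    using admissible_independent[OF assms(1-3,5-9) that] .
  show "QDsub SA SB \<rho>AD \<rho>BD \<subseteq> LambdaJ SD"
    using QDsub_subset_LambdaJ[OF assms(2-4,7,8)] .
  show "v + w \<in> Jo \<rho>XA \<rho>XB" if "v \<in> Jo \<rho>XA \<rho>XB" "w \<in> Jo \<rho>XA \<rho>XB" for v w
    using Jo_add[OF assms(5,6) that] .
  show "Omega SX SA SB \<rho>XA \<rho>XB \<rho>AD \<rho>BD (v + w) =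
          {a + b | a b. a \<in> Omega SX SA SB \<rho>XA \<rho>XB \<rho>AD \<rho>BD v \<and>
                        b \<in> Omega SX SA SB \<rho>XA \<rho>XB \<rho>AD \<rho>BD w}"
    if "v \<in> Jo \<rho>XA \<rho>XB" for v w
    using Omega_add[OF assms(1-3,5-8) that] .
qed

end
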